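(* Let $q$ be a prime power, let $m,n$ be positive integers and let $\mathcal{C}_2 \subsetneqq \mathcal{C}_1 \subseteq \mathbb{F}_q^{m \times n}$ be $\mathbb{F}_q$-linear codes, with $\ell = \dim(\mathcal{C}_1) - \dim(\mathcal{C}_2)$. Encode a message as follows: fix a subspace $\mathcal{W}$ with $\mathcal{C}_1 = \mathcal{C}_2 \oplus \mathcal{W}$ and an $\mathbb{F}_q$-linear isomorphism $\psi : \mathbb{F}_q^\ell \to \mathcal{W}$; the message $\mathbf{x}$ is uniformly distributed on $\mathbb{F}_q^\ell$ and is encoded as $C = \psi(\mathbf{x}) + D$, where $D$ is uniformly distributed on $\mathcal{C}_2$ and independent of $\mathbf{x}$. An adversary wire-tapping $\mu$ links observes $CB^T \in \mathbb{F}_q^{m \times \mu}$ for some matrix $B \in \mathbb{F}_q^{\mu \times n}$. Mutual information $I(\cdot;\cdot)$ is computed with logarithms to base $q$. Then: (1) for every integer $1 \leq r \leq \ell$, $d_{M,r}(\mathcal{C}_2^\perp, \mathcal{C}_1^\perp) = \min\{\mu \geq 0 \mid \exists B \in \mathbb{F}_q^{\mu \times n} \text{ with } I(\mathbf{x}; CB^T) \geq r\}$; (2) for every integer $0 \leq \mu \leq n$, $K_{M,\mu}(\mathcal{C}_2^\perp, \mathcal{C}_1^\perp) = \max\{ I(\mathbf{x}; CB^T) \mid B \in \mathbb{F}_q^{\mu' \times n},\ 0 \leq \mu' \leq \mu\}$ (where for $\mu' = 0$ the observation is trivial and gives zero information); (3) $t = d_R(\mathcal{C}_2^\perp, \mathcal{C}_1^\perp)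 - 1$ is the largest integer $\mu$ such that $I(\mathbf{x}; CB^T) = 0$ for every $B \in \mathbb{F}_q^{\mu \times n}$.
   Context: For $C \in \mathbb{F}_q^{m\times n}$, ${\rm Row}(C) \subseteq \mathbb{F}_q^n$ is its row space and ${\rm Rk}(C) = \dim {\rm Row}(C)$. For a subspace $\mathcal{L} \subseteq \mathbb{F}_q^n$, the rank support space is $\mathcal{V}_\mathcal{L} = \{V \in \mathbb{F}_q^{m \times n} \mid {\rm Row}(V) \subseteq \mathcal{L}\}$. For nested linear codes $\mathcal{D}_2 \subsetneqq \mathcal{D}_1 \subseteq \mathbb{F}_q^{m\times n}$ and $1 \le r \le \dim \mathcal{D}_1 - \dim \mathcal{D}_2$, the $r$-th relative generalized matrix weight is $d_{M,r}(\mathcal{D}_1,\mathcal{D}_2) = \min\{\dim \mathcal{L} \mid \mathcal{L} \subseteq \mathbb{F}_q^n \text{ subspace}, \dim(\mathcal{D}_1 \cap \mathcal{V}_\mathcal{L}) - \dim(\mathcal{D}_2 \cap \mathcal{V}_\mathcal{L}) \geq r\}$; for $0 \le \mu \le n$ the relative dimension/rank support profile is $K_{M,\mu}(\mathcal{D}_1,\mathcal{D}_2) = \max\{\dim(\mathcal{D}_1 \cap \mathcal{V}_\mathcal{L}) - \dim(\mathcal{D}_2 \cap \mathcal{V}_\mathcal{L}) \mid \mathcal{L} \subseteq \mathbb{F}_q^n, \dim \mathcal{L} \le \mu\}$; and $d_R(\mathcal{D}_1,\mathcal{D}_2) = \min\{{\rm Rk}(C) \mid C \in \mathcal{D}_1,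 C \notin \mathcal{D}_2\}$. The dual of a linear code $\mathcal{C} \subseteq \mathbb{F}_q^{m \times n}$ is $\mathcal{C}^\perp = \{D \mid {\rm Trace}(CD^T) = 0 \ \forall C \in \mathcal{C}\}$; note $\mathcal{C}_1^\perp \subsetneqq \mathcal{C}_2^\perp$. *)

theory Defs
  imports "HOL-Library.Function_Algebras" "HOL-Probability.Probability_Mass_Function"
begin

text \<open>Vectors of length n over a field: functions nat => 'a vanishing outside {0..<n}.
  Matrices of size m x n: functions nat => nat => 'a vanishing outside {0..<m} x {0..<n}.\<close>

definition vscale :: "'a::field \<Rightarrow> (nat \<Rightarrow> 'a) \<Rightarrow> (nat \<Rightarrow> 'a)" where
  "vscale c v = (\<lambda>j. c * v j)"

definition mscale :: "'a::field \<Rightarrow> (nat \<Rightarrow> nat \<Rightarrow> 'a) \<Rightarrow> (nat \<Rightarrow> nat \<Rightarrow> 'a)" where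
  "mscale c M = (\<lambda>i j. c * M i j)"

lemma vector_space_vscale: "vector_space (vscale :: 'a::field \<Rightarrow> _)"
  by unfold_locales (auto simp: vscale_def fun_eq_iff algebra_simps)

lemma vector_space_mscale: "vector_space (mscale :: 'a::field \<Rightarrow> _)"
  by unfold_locales (auto simp: mscale_def fun_eq_iff algebra_simps)

definition vecs :: "nat \<Rightarrow> (nat \<Rightarrow> 'a::zero) set" where
  "vecs n = {v. \<forall>j. n \<le> j \<longrightarrow> v j = 0}"

definition mats :: "nat \<Rightarrow> nat \<Rightarrow> (nat \<Rightarrow> nat \<Rightarrow> 'a::zero) set" where
  "mats m n = {M. \<forall>i j. (m \<le> i \<or> n \<le> j) \<longrightarrow> M i j = 0}"

abbreviation vdim :: "(nat \<Rightarrow> 'a::field) set \<Rightarrow> nat" where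
  "vdim \<equiv> vector_space.dim vscale"
abbreviation mdim :: "(nat \<Rightarrow> nat \<Rightarrow> 'a::field) set \<Rightarrow> nat" where
  "mdim \<equiv> vector_space.dim mscale"
abbreviation vsubspace :: "(nat \<Rightarrow> 'a::field) set \<Rightarrow> bool" where
  "vsubspace \<equiv> module.subspace vscale"
abbreviation msubspace :: "(nat \<Rightarrow> nat \<Rightarrow> 'a::field) set \<Rightarrow> bool" where
  "msubspace \<equiv> module.subspace mscale"

definition lin_code :: "nat \<Rightarrow> nat \<Rightarrow> (nat \<Rightarrow> nat \<Rightarrow> 'a::field) set \<Rightarrow> bool" where
  "lin_code m n C \<longleftrightarrow> C \<subseteq> mats m n \<and> msubspace C"

definition row_space :: "nat \<Rightarrow> (nat \<Rightarrow> nat \<Rightarrow> 'a::field) \<Rightarrow> (nat \<Rightarrow> 'a) set" where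
  "row_space m C = module.span vscale {C i | i. i < m}"

definition rk :: "nat \<Rightarrow> (nat \<Rightarrow> nat \<Rightarrow> 'a::field) \<Rightarrow> nat" where
  "rk m C = vdim (row_space m C)"

definition rank_support :: "nat \<Rightarrow> nat \<Rightarrow> (nat \<Rightarrow> 'a::field) set \<Rightarrow> (nat \<Rightarrow> nat \<Rightarrow> 'a) set" where
  "rank_support m n L = {V \<in> mats m n. row_space m V \<subseteq> L}"

text \<open>Trace dual: Trace(C D^T) = sum_{i,j} C_ij D_ij.\<close>
definition dual_code :: "nat \<Rightarrow> nat \<Rightarrow> (nat \<Rightarrow> nat \<Rightarrow> 'a::field) set \<Rightarrow> (nat \<Rightarrow> nat \<Rightarrow> 'a) set" where
  "dual_code m n C = {D \<in> mats m n. \<forall>M\<in>C. (\<Sum>i<m. \<Sum>j<n. M i j * D i j) = 0}"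

definition rgmw :: "nat \<Rightarrow> nat \<Rightarrow> nat \<Rightarrow> (nat \<Rightarrow> nat \<Rightarrow> 'a::field) set \<Rightarrow> (nat \<Rightarrow> nat \<Rightarrow> 'a) set \<Rightarrow> nat" where
  "rgmw m n r D1 D2 = (LEAST k. \<exists>L. L \<subseteq> vecs n \<and> vsubspace L \<and> vdim L = k \<and>
      int (mdim (D1 \<inter> rank_support m n L)) - int (mdim (D2 \<inter> rank_support m n L)) \<ge> int r)"

definition rdrsp :: "nat \<Rightarrow> nat \<Rightarrow> nat \<Rightarrow> (nat \<Rightarrow> nat \<Rightarrow> 'a::field) set \<Rightarrow> (nat \<Rightarrow> nat \<Rightarrow> 'a) set \<Rightarrow> int" where
  "rdrsp m n \<mu> D1 D2 = Max {int (mdim (D1 \<inter> rank_support m n L)) - int (mdim (D2 \<inter> rank_support m n L)) | L.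
      L \<subseteq> vecs n \<and> vsubspace L \<and> vdim L \<le> \<mu>}"

definition rel_rank_dist :: "nat \<Rightarrow> (nat \<Rightarrow> nat \<Rightarrow> 'a::field) set \<Rightarrow> (nat \<Rightarrow> nat \<Rightarrow> 'a) set \<Rightarrow> nat" where
  "rel_rank_dist m D1 D2 = (LEAST k. \<exists>C \<in> D1. C \<notin> D2 \<and> rk m C = k)"

definition mult_transp :: "nat \<Rightarrow> nat \<Rightarrow> nat \<Rightarrow> (nat \<Rightarrow> nat \<Rightarrow> 'a::field) \<Rightarrow> (nat \<Rightarrow> nat \<Rightarrow> 'a) \<Rightarrow> (nat \<Rightarrow> nat \<Rightarrow> 'a)" where
  "mult_transp m n \<mu> C B = (\<lambda>i k. if i < m \<and> k < \<mu> then (\<Sum>j<n. C i j * B k j) else 0)"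

definition mutual_info :: "real \<Rightarrow> 'w pmf \<Rightarrow> ('w \<Rightarrow> 'x) \<Rightarrow> ('w \<Rightarrow> 'y) \<Rightarrow> real" where
  "mutual_info b P X Y =
     (\<Sum>x \<in> X ` set_pmf P. \<Sum>y \<in> Y ` set_pmf P.
        (let pxy = measure_pmf.prob P {w. X w = x \<and> Y w = y};
             px = measure_pmf.prob P {w. X w = x};
             py = measure_pmf.prob P {w. Y w = y}
         in if pxy = 0 then 0 else pxy * log b (pxy / (px * py))))"

text \<open>The wiretap coset coding scheme: (x, D) uniform on F^l x C2 (so x uniform, D uniform
  and independent of x); C = psi x + D; the adversary observes C B^T.\<close>
definition leak_info :: "nat \<Rightarrow> nat \<Rightarrow> nat \<Rightarrow> (nat \<Rightarrow> nat \<Rightarrow> 'a::{finite,field}) set \<Rightarrow>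
    ((nat \<Rightarrow> 'a) \<Rightarrow> (nat \<Rightarrow> nat \<Rightarrow> 'a)) \<Rightarrow> nat \<Rightarrow> (nat \<Rightarrow> nat \<Rightarrow> 'a) \<Rightarrow> real" where
  "leak_info m n l C2 \<psi> \<mu> B =
     mutual_info (real CARD('a)) (pmf_of_set (vecs l \<times> C2)) fst
       (\<lambda>(x, D). mult_transp m n \<mu> (\<psi> x + D) B)"

end

theory Submission imports Defs
begin

text \<open>
  Write f for the observation map C \<mapsto> C B^T and L for the row space of B.  Since C = \<psi>(x) + D
  with D uniform on C2, the observation f(C) is uniform on the coset f(\<psi> x) + f(C2) inside f(C1),
  so the leaked information is I(x; C B^T) = log_q (|f(C1)| / |f(C2)|).  The rank support space V_L
  consists of the products A B, and Trace(C (A B)^T) = Trace((C B^T) A^T) makes A \<mapsto> A B carry the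
  dual of f(C) onto the part of the dual of C lying in V_L; counting kernels then gives
  |f(C)| |C^\<bottom> \<inter> V_L| = |V_L|.  Together, I(x; C B^T) = dim(C2^\<bottom> \<inter> V_L) - dim(C1^\<bottom> \<inter> V_L).
  As every subspace of dimension at most \<mu> is the row space of a \<mu> \<times> n matrix, (1) and (2) are
  the definitions of d_{M,r} and K_{M,\<mu>} rewritten, and (3) holds because a codeword C lies in
  V_L exactly when Row(C) \<subseteq> L.
\<close>

section \<open>Counting in finite vector spaces\<close>

context vector_space begin

lemma card_span_independent:
  assumes "finite (UNIV :: 'a set)" and "finite B" and "independent B"
  shows "finite (span B)" and "card (span B) = CARD('a) ^ card B"
proof -
  have "finite (span B) \<and> card (span B) = CARD('a) ^ card B"
    using assms(2,3)
  proof (induction B rule: finite_induct)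
    case (insert a B)
    have indB: "independent B" and aB: "a \<notin> span B"
      using insert.prems insert.hyps(2) by (auto simp: independent_insert)
    let ?h = "\<lambda>(k, v). scale k a + v"
    have img: "?h ` (UNIV \<times> span B) = span (insert a B)"
    proof
      show "?h ` (UNIV \<times> span B) \<subseteq> span (insert a B)"
        using span_mono[of B "insert a B"]
        by (clarsimp, metis insertI1 span_add span_base span_scale subset_insertI subsetD)
      show "span (insert a B) \<subseteq> ?h ` (UNIV \<times> span B)"
      proof
        fix x assume "x \<in> span (insert a B)"
        then obtain k where "x - scale k a \<in> span B" by (auto simp: span_insert)
        then show "x \<in> ?h ` (UNIV \<times> span B)"
          by (intro image_eqI[of _ _ "(k, x - scale k a)"]) auto
      qed
    qed
    have "inj_on ?h (UNIV \<times> span B)"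
    proof (rule inj_onI, clarsimp)
      fix k v k' v'
      assume "v \<in> span B" "v' \<in> span B" and eq: "scale k a + v = scale k' a + v'"
      then have "scale (k - k') a \<in> span B"
        by (metis add_diff_cancel_left' add_diff_eq diff_add_cancel scale_left_diff_distrib span_diff)
      then have "k = k'" using aB
        by (metis eq_iff_diff_eq_0 span_scale scale_one scale_scale left_inverse)
      then show "k = k' \<and> v = v'" using eq by simp
    qed
    then have "card (span (insert a B)) = CARD('a) * card (span B)"
      using img by (metis card_image card_cartesian_product)
    moreover have "finite (span (insert a B))"
      using img insert.IH indB assms(1) by (metis finite_SigmaI finite_imageI)
    ultimately show ?case using insert.IH[OF indB] insert.hyps by simp
  qed simp
  then show "finite (span B)" and "card (span B) = CARD('a) ^ card B" by auto
qed

lemma card_subspace: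
  assumes "finite (UNIV :: 'a set)" and "finite S" and "subspace S"
  shows "card S = CARD('a) ^ dim S"
proof -
  obtain B where B: "B \<subseteq> S" "independent B" "S \<subseteq> span B" "card B = dim S"
    by (rule basis_exists)
  then have "span B = S" using span_subspace assms(3) by blast
  then show ?thesis using card_span_independent B assms(1,2) finite_subset by metis
qed

lemma dim_subspace_mono:
  assumes "finite (UNIV :: 'a set)" and "finite T" and "subspace S" and "subspace T" and "S \<subseteq> T"
  shows "dim S \<le> dim T" and "dim S < dim T \<longleftrightarrow> S \<noteq> T"
proof -
  have "card {0, 1 :: 'a} \<le> CARD('a)" using assms(1) by (intro card_mono) auto
  then have q: "1 < CARD('a)" by simp
  have "finite S" using assms(2,5) finite_subset by blast
  then have card: "card S = CARD('a) ^ dim S" "card T = CARD('a) ^ dim T"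
    using card_subspace assms by auto
  have "card S \<le> card T" using card_mono assms(2,5) by blast
  then show "dim S \<le> dim T" using card q power_increasing_iff by metis
  have "card S < card T \<longleftrightarrow> S \<noteq> T"
    using assms(2,5) psubset_card_mono by (metis less_irrefl psubsetI)
  then show "dim S < dim T \<longleftrightarrow> S \<noteq> T" using card q power_strict_increasing_iff by metis
qed

lemma obtain_indexed_basis:
  assumes "finite S" and "subspace S"
  obtains b k where "inj_on b {..<k}" and "b ` {..<k} \<subseteq> S" and "span (b ` {..<k}) = S"
    and "independent (b ` {..<k})" and "k = dim S"
proof -
  obtain B where B: "B \<subseteq> S" "independent B" "S \<subseteq> span B" "card B = dim S"
    by (rule basis_exists)
  have "finite B" using B(1) assms(1) finite_subset by auto
  then obtain b where "bij_betw b {..<card B} B"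
    using ex_bij_betw_nat_finite lessThan_atLeast0 by metis
  then show ?thesis
    using that[of b "card B"] B span_subspace[OF B(1,3) assms(2)] by (auto simp: bij_betw_def)
qed

lemma independent_image_sum_eq_0:
  assumes "inj_on b I" and "finite I" and "independent (b ` I)"
    and "(\<Sum>i\<in>I. scale (u i) (b i)) = 0" and "i \<in> I"
  shows "u i = 0"
proof -
  let ?v = "\<lambda>x. u (the_inv_into I b x)"
  have "(\<Sum>x\<in>b ` I. scale (?v x) x) = (\<Sum>i\<in>I. scale (u i) (b i))"
    using assms(1) by (simp add: sum.reindex the_inv_into_f_f)
  then have "\<forall>x\<in>b ` I. ?v x = 0"
    using assms(3)[unfolded independent_explicit_finite_subsets, rule_format, of "b ` I" ?v]
      assms(2,4) by simp
  then have "?v (b i) = 0" using assms(5) by blast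
  then show ?thesis using assms(1,5) by (simp add: the_inv_into_f_f)
qed

end

context module begin

lemma card_fibre_eq_card_kernel:
  fixes g :: "'b \<Rightarrow> 'c::ab_group_add"
  assumes "subspace X" and add: "\<And>x y. g (x + y) = g x + g y" and "x0 \<in> X"
  shows "card {x\<in>X. g (b + x) = g (b + x0)} = card {x\<in>X. g x = 0}"
proof -
  have "{x\<in>X. g (b + x) = g (b + x0)} = (\<lambda>z. x0 + z) ` {x\<in>X. g x = 0}"
  proof (rule set_eqI, rule iffI)
    fix x assume x: "x \<in> {x\<in>X. g (b + x) = g (b + x0)}"
    have "g (b + x) = g (x - x0) + g (b + x0)"
      using add[of "x - x0" "b + x0"] by (simp add: algebra_simps)
    then have "g (x - x0) = 0" using x by simp
    then show "x \<in> (\<lambda>z. x0 + z) ` {x\<in>X. g x = 0}"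
      using x assms(1,3) by (intro image_eqI[of _ _ "x - x0"]) (auto simp: subspace_diff)
  qed (use assms(1,3) add in \<open>auto simp: subspace_add add.assoc\<close>)
  moreover have "inj_on (\<lambda>z. x0 + z) {x\<in>X. g x = 0}" by (rule inj_onI) simp
  ultimately show ?thesis by (simp add: card_image)
qed

lemma card_eq_card_image_mult_card_kernel:
  fixes g :: "'b \<Rightarrow> 'c::ab_group_add"
  assumes "finite X" and "subspace X" and "\<And>x y. g (x + y) = g x + g y"
  shows "card X = card (g ` X) * card {x\<in>X. g x = 0}"
proof -
  have "card X = (\<Sum>y\<in>g ` X. card {x\<in>X. g x = y})"
    using sum.group[OF assms(1) finite_imageI[OF assms(1)] subset_refl, where g=g and h="\<lambda>_. 1::nat"] by simp
  also have "\<dots> = (\<Sum>y\<in>g ` X. card {x\<in>X. g x = 0})"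
    using card_fibre_eq_card_kernel[OF assms(2,3), of _ 0] by (intro sum.cong) auto
  finally show ?thesis by simp
qed

end

section \<open>Matrices and the trace form\<close>

interpretation VS: vector_space "vscale :: 'a::field \<Rightarrow> (nat \<Rightarrow> 'a) \<Rightarrow> _"
  by (rule vector_space_vscale)

interpretation MS: vector_space "mscale :: 'a::field \<Rightarrow> (nat \<Rightarrow> nat \<Rightarrow> 'a) \<Rightarrow> _"
  by (rule vector_space_mscale)

lemma two_le_card_field: "2 \<le> CARD('a::{finite,field})"
  using card_mono[of UNIV "{0::'a, 1}"] by simp

lemma linear_mscale_image_subspace:
  "Vector_Spaces.linear mscale mscale f \<Longrightarrow> MS.subspace S \<Longrightarrow> MS.subspace (f ` S)"
  by (rule module_hom.subspace_image) (simp_all add: module_hom_iff_linear)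

lemma linear_mscaleI:
  assumes "\<And>x y. f (x + y) = f x + f y" and "\<And>c x. f (mscale c x) = mscale c (f x)"
  shows "Vector_Spaces.linear mscale mscale f"
  using assms vector_space_mscale by (simp add: Vector_Spaces.linear_iff)

lemma bij_betw_vecs_PiE:
  "bij_betw (\<lambda>v. restrict v {..<n}) (vecs n) (PiE {..<n} (\<lambda>_. (UNIV :: 'a::zero set)))"
  by (rule bij_betw_byWitness[where f' = "\<lambda>F i. if i < n then F i else 0"])
     (auto simp: vecs_def fun_eq_iff PiE_def extensional_def not_less)

lemma card_vecs: "card (vecs n :: (nat \<Rightarrow> 'a::{finite,zero}) set) = CARD('a) ^ n"
  using bij_betw_same_card[OF bij_betw_vecs_PiE] by (simp add: card_PiE)

lemma finite_vecs [simp]: "finite (vecs n :: (nat \<Rightarrow> 'a::{finite,zero}) set)"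
  using bij_betw_finite[OF bij_betw_vecs_PiE[where 'a='a]] by (simp add: finite_PiE)

lemma bij_betw_mats_PiE:
  "bij_betw (\<lambda>M. \<lambda>p\<in>{..<R}\<times>{..<C}. M (fst p) (snd p)) (mats R C)
     (PiE ({..<R}\<times>{..<C}) (\<lambda>_. (UNIV :: 'a::zero set)))"
  by (rule bij_betw_byWitness[where f' = "\<lambda>F i j. if i < R \<and> j < C then F (i, j) else 0"])
     (auto simp: mats_def fun_eq_iff PiE_def extensional_def not_less)

lemma card_mats: "card (mats R C :: (nat \<Rightarrow> nat \<Rightarrow> 'a::{finite,zero}) set) = CARD('a) ^ (R * C)"
  using bij_betw_same_card[OF bij_betw_mats_PiE]
  by (simp add: card_PiE card_cartesian_product power_mult)

lemma finite_mats [simp]: "finite (mats R C :: (nat \<Rightarrow> nat \<Rightarrow> 'a::{finite,zero}) set)"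
  using bij_betw_finite[OF bij_betw_mats_PiE[where 'a='a]] by (simp add: finite_PiE)

lemma subspace_vecs: "VS.subspace (vecs n)"
  by (auto simp: VS.subspace_def vecs_def vscale_def)

lemma subspace_mats: "MS.subspace (mats R C)"
  by (auto simp: MS.subspace_def mats_def mscale_def)

lemma vdim_vecs: "vdim (vecs n :: (nat \<Rightarrow> 'a::{finite,field}) set) = n"
  using VS.card_subspace[OF _ finite_vecs[where 'a='a, of n] subspace_vecs] two_le_card_field[where 'a='a]
  by (simp add: card_vecs)

definition trace_form :: "nat \<Rightarrow> nat \<Rightarrow> (nat \<Rightarrow> nat \<Rightarrow> 'a::field) \<Rightarrow> (nat \<Rightarrow> nat \<Rightarrow> 'a) \<Rightarrow> 'a" where
  "trace_form R C X Y = (\<Sum>i<R. \<Sum>j<C. X i j * Y i j)"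

lemma trace_form_add_left: "trace_form R C (X + Y) Z = trace_form R C X Z + trace_form R C Y Z"
  by (simp add: trace_form_def distrib_right sum.distrib)

lemma trace_form_add_right: "trace_form R C X (Y + Z) = trace_form R C X Y + trace_form R C X Z"
  by (simp add: trace_form_def distrib_left sum.distrib)

lemma trace_form_scale_left: "trace_form R C (mscale c X) Z = c * trace_form R C X Z"
  by (simp add: trace_form_def mscale_def sum_distrib_left mult.assoc)

lemma trace_form_scale_right: "trace_form R C X (mscale c Z) = c * trace_form R C X Z"
  by (simp add: trace_form_def mscale_def sum_distrib_left mult.left_commute)

lemma trace_form_zero_left [simp]: "trace_form R C 0 Z = 0"
  by (simp add: trace_form_def)

lemma trace_form_zero_right [simp]: "trace_form R C X 0 = 0"
  by (simp add: trace_form_def)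

lemma trace_form_sum_left: "trace_form R C (\<Sum>j\<in>J. f j) Z = (\<Sum>j\<in>J. trace_form R C (f j) Z)"
proof (induction J rule: infinite_finite_induct)
  case (insert x F)
  show ?case unfolding sum.insert[OF insert.hyps] trace_form_add_left insert.IH ..
next
  case (infinite A)
  show ?case unfolding sum.infinite[OF infinite] by (rule trace_form_zero_left)
qed (simp only: sum.empty trace_form_zero_left)

lemma trace_form_unit_right:
  assumes "a < R" and "b < C"
  shows "trace_form R C X (\<lambda>i j. if i = a \<and> j = b then 1 else 0) = X a b"
proof -
  have "trace_form R C X (\<lambda>i j. if i = a \<and> j = b then 1 else 0)
      = (\<Sum>i<R. \<Sum>j<C. if i = a \<and> j = b then X i j else 0)"
    unfolding trace_form_def by (intro sum.cong refl) auto
  also have "\<dots> = (\<Sum>i<R. if i = a then X i b else 0)"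
    using assms by (intro sum.cong refl) (auto simp: sum.delta)
  also have "\<dots> = X a b" using assms by (simp add: sum.delta)
  finally show ?thesis .
qed

lemma trace_form_nondegenerate:
  assumes "X \<in> mats R C" and "\<And>Y. Y \<in> mats R C \<Longrightarrow> trace_form R C X Y = 0"
  shows "X = 0"
proof (intro ext)
  fix a b
  show "X a b = 0 a b"
  proof (cases "a < R \<and> b < C")
    case True
    let ?E = "\<lambda>i j. if i = a \<and> j = b then 1 else 0"
    have "?E \<in> mats R C" using True by (auto simp: mats_def)
    then have "trace_form R C X ?E = 0" by (rule assms(2))
    then show ?thesis using trace_form_unit_right[of a R b C X] True by simp
  qed (use assms(1) in \<open>auto simp: mats_def\<close>)
qed

section \<open>Dual codes\<close>

lemma dual_code_trace_form: "dual_code R C S = {D \<in> mats R C. \<forall>M\<in>S. trace_form R C M D = 0}"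
  by (simp add: dual_code_def trace_form_def)

lemma dual_code_subset_mats: "dual_code R C S \<subseteq> mats R C"
  by (simp add: dual_code_def)

lemma subspace_dual_code: "MS.subspace (dual_code R C S)"
  unfolding dual_code_trace_form MS.subspace_def
  using subspace_mats[of R C, unfolded MS.subspace_def]
  by (auto simp: trace_form_add_right trace_form_scale_right)

definition trace_coords ::
    "nat \<Rightarrow> nat \<Rightarrow> nat \<Rightarrow> (nat \<Rightarrow> nat \<Rightarrow> nat \<Rightarrow> 'a::field) \<Rightarrow> (nat \<Rightarrow> nat \<Rightarrow> 'a) \<Rightarrow> (nat \<Rightarrow> nat \<Rightarrow> 'a)" where
  "trace_coords R C k b A = (\<lambda>i j. if i = 0 \<and> j < k then trace_form R C (b j) A else 0)"

lemma trace_coords_in_mats: "trace_coords R C k b A \<in> mats 1 k"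
  by (simp add: trace_coords_def mats_def)

lemma trace_coords_add: "trace_coords R C k b (A + A') = trace_coords R C k b A + trace_coords R C k b A'"
  by (auto simp: trace_coords_def fun_eq_iff trace_form_add_right)

lemma trace_coords_scale: "trace_coords R C k b (mscale c A) = mscale c (trace_coords R C k b A)"
  by (simp add: trace_coords_def fun_eq_iff trace_form_scale_right[unfolded mscale_def] mscale_def)

lemma linear_trace_coords: "Vector_Spaces.linear mscale mscale (trace_coords R C k b)"
  by (rule linear_mscaleI[OF trace_coords_add trace_coords_scale])

lemma trace_coords_kernel:
  assumes "MS.span (b ` {..<k}) = S"
  shows "{A \<in> mats R C. trace_coords R C k b A = 0} = dual_code R C S"
proof -
  have "trace_coords R C k b A = 0 \<longleftrightarrow> b ` {..<k} \<subseteq> {M. trace_form R C M A = 0}" for A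
    by (auto simp: trace_coords_def fun_eq_iff)
  also have "\<dots> A \<longleftrightarrow> S \<subseteq> {M. trace_form R C M A = 0}" for A
  proof -
    have "MS.subspace {M. trace_form R C M A = 0}"
      by (auto simp: MS.subspace_def trace_form_add_left trace_form_scale_left)
    then show ?thesis using MS.span_minimal[of "b ` {..<k}"] MS.span_superset[of "b ` {..<k}"]
      unfolding assms by (meson subset_trans)
  qed
  finally show ?thesis by (auto simp: dual_code_trace_form)
qed

lemma trace_form_trace_coords:
  "trace_form 1 k (trace_coords R C k b A) c = trace_form R C (\<Sum>j<k. mscale (c 0 j) (b j)) A"
  unfolding trace_form_sum_left trace_form_scale_left trace_form_def[of 1 k]
  by (simp add: trace_coords_def mult.commute)

lemma card_mats_le_card_dual_code_mult_card:
  fixes S :: "(nat \<Rightarrow> nat \<Rightarrow> 'a::{finite,field}) set"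
  assumes "S \<subseteq> mats R C" and "MS.subspace S"
  shows "CARD('a) ^ (R * C) \<le> card (dual_code R C S) * card S"
proof -
  have "finite S" by (rule finite_subset[OF assms(1) finite_mats])
  then obtain b k where b: "MS.span (b ` {..<k}) = S" and k: "k = mdim S"
    using MS.obtain_indexed_basis assms(2) by metis
  let ?g = "trace_coords R C k b"
  have "card (mats R C :: (nat \<Rightarrow> nat \<Rightarrow> 'a) set) = card (?g ` mats R C) * card {A \<in> mats R C. ?g A = 0}"
    by (rule MS.card_eq_card_image_mult_card_kernel[OF finite_mats subspace_mats trace_coords_add])
  then have "CARD('a) ^ (R * C) = card (?g ` mats R C) * card (dual_code R C S)"
    by (simp add: card_mats trace_coords_kernel[OF b])
  also have "card (?g ` mats R C) \<le> card (mats 1 k :: (nat \<Rightarrow> nat \<Rightarrow> 'a) set)"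
    using trace_coords_in_mats by (intro card_mono) auto
  also have "\<dots> = card S"
    using MS.card_subspace[OF _ \<open>finite S\<close> assms(2)] k by (simp add: card_mats)
  finally show ?thesis by (simp add: mult.commute)
qed

lemma dual_code_nontrivial:
  fixes T :: "(nat \<Rightarrow> nat \<Rightarrow> 'a::{finite,field}) set"
  assumes "T \<subseteq> mats R C" and "MS.subspace T" and "T \<noteq> mats R C"
  shows "\<exists>c\<in>dual_code R C T. c \<noteq> 0"
proof (rule ccontr)
  assume "\<not> ?thesis"
  then have "card (dual_code R C T) \<le> card {0 :: nat \<Rightarrow> nat \<Rightarrow> 'a}"
    by (intro card_mono) auto
  then have "card (dual_code R C T) * card T \<le> card T"
    using mult_le_mono1[of _ 1 "card T"] by simp
  moreover have "card T < CARD('a) ^ (R * C)"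
    using psubset_card_mono[OF finite_mats, of T R C] assms(1,3) by (simp add: card_mats)
  ultimately show False
    using card_mats_le_card_dual_code_mult_card[OF assms(1,2)] by linarith
qed

lemma trace_coords_surj:
  fixes b :: "nat \<Rightarrow> nat \<Rightarrow> nat \<Rightarrow> 'a::{finite,field}"
  assumes "inj_on b {..<k}" and "b ` {..<k} \<subseteq> mats R C" and "MS.independent (b ` {..<k})"
  shows "trace_coords R C k b ` mats R C = mats 1 k"
proof (rule ccontr)
  let ?T = "trace_coords R C k b ` mats R C"
  assume "?T \<noteq> mats 1 k"
  moreover have "?T \<subseteq> mats 1 k" using trace_coords_in_mats by blast
  moreover have "MS.subspace ?T"
    by (rule linear_mscale_image_subspace[OF linear_trace_coords subspace_mats])
  ultimately have "\<exists>c\<in>dual_code 1 k ?T. c \<noteq> 0" by (intro dual_code_nontrivial)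
  then obtain c where c: "c \<in> dual_code 1 k ?T" "c \<noteq> 0" ..
  \<comment> \<open>A nonzero functional vanishing on the image pulls back to a dependency among the b j.\<close>
  have "(\<Sum>j<k. mscale (c 0 j) (b j)) = 0"
  proof (rule trace_form_nondegenerate)
    show "(\<Sum>j<k. mscale (c 0 j) (b j)) \<in> mats R C"
      by (intro MS.subspace_sum[OF subspace_mats] MS.subspace_scale[OF subspace_mats])
         (use assms(2) in blast)
    fix A :: "nat \<Rightarrow> nat \<Rightarrow> 'a" assume "A \<in> mats R C"
    then have "trace_form 1 k (trace_coords R C k b A) c = 0"
      using c(1) by (simp add: dual_code_trace_form)
    then show "trace_form R C (\<Sum>j<k. mscale (c 0 j) (b j)) A = 0"
      by (simp only: trace_form_trace_coords)
  qed
  then have row: "c 0 j = 0" if "j < k" for j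
    using MS.independent_image_sum_eq_0[OF assms(1) finite_lessThan assms(3)] that by simp
  have "c \<in> mats 1 k" using c(1) by (simp add: dual_code_trace_form)
  then have "c i j = 0" for i j
    using row by (cases "i = 0 \<and> j < k") (auto simp: mats_def)
  then have "c = 0" by (simp add: fun_eq_iff)
  with c(2) show False ..
qed

lemma card_dual_code_mult_card:
  fixes S :: "(nat \<Rightarrow> nat \<Rightarrow> 'a::{finite,field}) set"
  assumes "S \<subseteq> mats R C" and "MS.subspace S"
  shows "card (dual_code R C S) * card S = CARD('a) ^ (R * C)"
proof -
  have "finite S" by (rule finite_subset[OF assms(1) finite_mats])
  then obtain b k where b: "inj_on b {..<k}" "b ` {..<k} \<subseteq> S" "MS.span (b ` {..<k}) = S"
      "MS.independent (b ` {..<k})" and k: "k = mdim S"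
    using MS.obtain_indexed_basis assms(2) by metis
  let ?g = "trace_coords R C k b"
  have "card (mats R C :: (nat \<Rightarrow> nat \<Rightarrow> 'a) set) = card (?g ` mats R C) * card {A \<in> mats R C. ?g A = 0}"
    by (rule MS.card_eq_card_image_mult_card_kernel[OF finite_mats subspace_mats trace_coords_add])
  then have "CARD('a) ^ (R * C) = card (?g ` mats R C) * card (dual_code R C S)"
    by (simp add: card_mats trace_coords_kernel[OF b(3)])
  also have "?g ` mats R C = mats 1 k"
    using trace_coords_surj[OF b(1) subset_trans[OF b(2) assms(1)] b(4)] .
  also have "card (mats 1 k :: (nat \<Rightarrow> nat \<Rightarrow> 'a) set) = card S"
    using MS.card_subspace[OF _ \<open>finite S\<close> assms(2)] k by (simp add: card_mats)
  finally show ?thesis by (simp add: mult.commute)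
qed

lemma mdim_dual_code:
  fixes S :: "(nat \<Rightarrow> nat \<Rightarrow> 'a::{finite,field}) set"
  assumes "S \<subseteq> mats R C" and "MS.subspace S"
  shows "mdim (dual_code R C S) + mdim S = R * C"
proof -
  have "finite S" by (rule finite_subset[OF assms(1) finite_mats])
  moreover have "finite (dual_code R C S)" by (simp add: dual_code_def)
  ultimately have "card (dual_code R C S) = CARD('a) ^ mdim (dual_code R C S)"
      and "card S = CARD('a) ^ mdim S"
    using MS.card_subspace[OF _ _ subspace_dual_code[of R C S]] MS.card_subspace[OF _ _ assms(2)]
    by simp_all
  then have "CARD('a) ^ (mdim (dual_code R C S) + mdim S) = CARD('a) ^ (R * C)"
    using card_dual_code_mult_card[OF assms] by (simp add: power_add)
  then show ?thesis using two_le_card_field[where 'a='a] by simp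
qed

lemma dual_code_psubset:
  fixes S T :: "(nat \<Rightarrow> nat \<Rightarrow> 'a::{finite,field}) set"
  assumes "S \<subset> T" and "T \<subseteq> mats R C" and "MS.subspace S" and "MS.subspace T"
  shows "dual_code R C T \<subset> dual_code R C S"
proof
  show "dual_code R C T \<subseteq> dual_code R C S" using assms(1) by (auto simp: dual_code_def)
  have "finite T" by (rule finite_subset[OF assms(2) finite_mats])
  then have "card S < card T" using assms(1) by (rule psubset_card_mono)
  moreover have "card (dual_code R C T) * card T = card (dual_code R C S) * card S"
    using card_dual_code_mult_card assms by (metis psubset_imp_subset subset_trans)
  moreover have "0 \<in> dual_code R C S" by (rule MS.subspace_0[OF subspace_dual_code])
  then have "card (dual_code R C S) > 0" by (auto simp: card_gt_0_iff dual_code_def)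
  ultimately show "dual_code R C T \<noteq> dual_code R C S" by auto
qed

section \<open>Row spaces and rank support spaces\<close>

lemma row_space_subset_vecs: "B \<in> mats \<mu> n \<Longrightarrow> row_space \<mu> B \<subseteq> vecs n"
  unfolding row_space_def
  by (intro VS.span_minimal[OF _ subspace_vecs]) (auto simp: mats_def vecs_def)

lemma subspace_row_space: "VS.subspace (row_space \<mu> B)"
  unfolding row_space_def by (rule VS.subspace_span)

lemma vdim_row_space_le: "vdim (row_space \<mu> B) \<le> \<mu>"
proof -
  have rows: "{B i | i. i < \<mu>} = B ` {..<\<mu>}" by auto
  have "vdim (row_space \<mu> B) \<le> card {B i | i. i < \<mu>}"
    unfolding row_space_def by (rule VS.dim_le_card[OF order_refl]) (simp add: rows)
  also have "\<dots> \<le> \<mu>" unfolding rows using card_image_le[of "{..<\<mu>}" B] by simp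
  finally show ?thesis .
qed

lemma obtain_matrix_with_row_space:
  fixes L :: "(nat \<Rightarrow> 'a::{finite,field}) set"
  assumes "L \<subseteq> vecs n" and "VS.subspace L" and "vdim L \<le> \<mu>"
  obtains B where "B \<in> mats \<mu> n" and "row_space \<mu> B = L"
proof -
  have "finite L" by (rule finite_subset[OF assms(1) finite_vecs])
  obtain b k where "inj_on b {..<k}" and b: "b ` {..<k} \<subseteq> L" "VS.span (b ` {..<k}) = L"
    and "VS.independent (b ` {..<k})" and "k = vdim L"
    by (rule VS.obtain_indexed_basis[OF \<open>finite L\<close> assms(2)])
  then have "k \<le> \<mu>" using assms(3) by simp
  define B where "B = (\<lambda>i. if i < k then b i else 0)"
  have "{B i | i. i < \<mu>} \<subseteq> insert 0 (b ` {..<k})"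
  proof
    fix v assume "v \<in> {B i | i. i < \<mu>}"
    then obtain i where "v = B i" by blast
    then show "v \<in> insert 0 (b ` {..<k})" by (cases "i < k") (auto simp: B_def)
  qed
  then have "VS.span {B i | i. i < \<mu>} \<subseteq> VS.span (insert 0 (b ` {..<k}))"
    by (rule VS.span_mono)
  then have "row_space \<mu> B \<subseteq> L" unfolding row_space_def VS.span_insert_0 b(2) .
  moreover have "b ` {..<k} \<subseteq> {B i | i. i < \<mu>}"
  proof
    fix v assume "v \<in> b ` {..<k}"
    then obtain j where "j < k" "v = b j" by blast
    then show "v \<in> {B i | i. i < \<mu>}"
      using \<open>k \<le> \<mu>\<close> by (intro CollectI exI[of _ j]) (simp add: B_def)
  qed
  then have "VS.span (b ` {..<k}) \<subseteq> VS.span {B i | i. i < \<mu>}" by (rule VS.span_mono)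
  then have "L \<subseteq> row_space \<mu> B" unfolding row_space_def b(2) .
  moreover have "B \<in> mats \<mu> n"
  proof -
    have "B i j = 0" if "\<mu> \<le> i \<or> n \<le> j" for i j
    proof (cases "i < k")
      case True
      then have "b i \<in> vecs n" "n \<le> j" using b(1) assms(1) \<open>k \<le> \<mu>\<close> that by auto
      then show ?thesis using True by (simp add: B_def vecs_def)
    qed (simp add: B_def)
    then show ?thesis by (simp add: mats_def)
  qed
  ultimately show ?thesis using that by blast
qed

lemma rk_eq_0_imp_zero:
  fixes C :: "nat \<Rightarrow> nat \<Rightarrow> 'a::{finite,field}"
  assumes "C \<in> mats m n" and "rk m C = 0"
  shows "C = 0"
proof -
  have "finite (row_space m C)" by (rule finite_subset[OF row_space_subset_vecs[OF assms(1)] finite_vecs])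
  then have "card (row_space m C) = 1"
    using VS.card_subspace[OF _ _ subspace_row_space[of m C]] assms(2) by (simp add: rk_def)
  then obtain z where z: "row_space m C = {z}" by (rule card_1_singletonE)
  then have "row_space m C = {0}" using VS.subspace_0[OF subspace_row_space, of m C] by simp
  then have "C i = 0" if "i < m" for i
    using VS.span_base[of "C i" "{C i | i. i < m}"] that by (auto simp: row_space_def)
  moreover have "C i = 0" if "m \<le> i" for i using assms(1) that by (simp add: mats_def fun_eq_iff)
  ultimately show ?thesis by (metis not_less ext zero_fun_apply)
qed

lemma rank_support_eq_rows:
  assumes "VS.subspace L"
  shows "rank_support m n L = {V \<in> mats m n. \<forall>i<m. V i \<in> L}"
proof -
  have "row_space m V \<subseteq> L \<longleftrightarrow> (\<forall>i<m. V i \<in> L)" for V :: "nat \<Rightarrow> nat \<Rightarrow> 'a"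
  proof
    assume sub: "row_space m V \<subseteq> L"
    show "\<forall>i<m. V i \<in> L"
    proof (intro allI impI)
      fix i assume "i < m"
      then have "V i \<in> row_space m V" unfolding row_space_def by (intro VS.span_base) auto
      with sub show "V i \<in> L" ..
    qed
  next
    assume "\<forall>i<m. V i \<in> L"
    then show "row_space m V \<subseteq> L"
      unfolding row_space_def by (intro VS.span_minimal[OF _ assms]) auto
  qed
  then show ?thesis by (simp add: rank_support_def)
qed

lemma subspace_rank_support:
  assumes "VS.subspace L"
  shows "MS.subspace (rank_support m n L)"
  unfolding MS.subspace_def rank_support_eq_rows[OF assms]
proof (intro conjI ballI allI)
  show "0 \<in> {V \<in> mats m n. \<forall>i<m. V i \<in> L}"
    using VS.subspace_0[OF assms] MS.subspace_0[OF subspace_mats] by (simp add: zero_fun_def)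
next
  fix V W assume "V \<in> {V \<in> mats m n. \<forall>i<m. V i \<in> L}" "W \<in> {V \<in> mats m n. \<forall>i<m. V i \<in> L}"
  then show "V + W \<in> {V \<in> mats m n. \<forall>i<m. V i \<in> L}"
    by (auto intro: VS.subspace_add[OF assms] MS.subspace_add[OF subspace_mats])
next
  fix c V assume "V \<in> {V \<in> mats m n. \<forall>i<m. V i \<in> L}"
  moreover have "mscale c V i = vscale c (V i)" for i by (simp add: mscale_def vscale_def)
  ultimately show "mscale c V \<in> {V \<in> mats m n. \<forall>i<m. V i \<in> L}"
    by (auto intro: VS.subspace_scale[OF assms] MS.subspace_scale[OF subspace_mats])
qed

lemma rk_le_vdim:
  fixes C :: "nat \<Rightarrow> nat \<Rightarrow> 'a::{finite,field}"
  assumes "C \<in> rank_support m n L" and "L \<subseteq> vecs n" and "VS.subspace L"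
  shows "rk m C \<le> vdim L"
proof -
  have "finite L" by (rule finite_subset[OF assms(2) finite_vecs])
  moreover have "row_space m C \<subseteq> L" using assms(1) by (simp add: rank_support_def)
  ultimately show ?thesis
    unfolding rk_def by (intro VS.dim_subspace_mono(1)[OF _ _ subspace_row_space assms(3)]) simp_all
qed

lemma sum_fun_apply: "(\<Sum>x\<in>A. f x) i = (\<Sum>x\<in>A. f x i)"
  by (induction A rule: infinite_finite_induct) auto

lemma in_span_rows_iff:
  fixes B :: "nat \<Rightarrow> nat \<Rightarrow> 'a::field"
  shows "v \<in> VS.span {B k | k. k < \<mu>} \<longleftrightarrow> (\<exists>a. v = (\<Sum>k<\<mu>. vscale (a k) (B k)))"
proof
  assume "v \<in> VS.span {B k | k. k < \<mu>}"
  then show "\<exists>a. v = (\<Sum>k<\<mu>. vscale (a k) (B k))"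
  proof (induction rule: VS.span_induct_alt)
    case base
    show ?case by (intro exI[of _ "\<lambda>_. 0"]) simp
  next
    case (step c x y)
    then obtain k0 a where k0: "k0 < \<mu>" "x = B k0" and a: "y = (\<Sum>k<\<mu>. vscale (a k) (B k))"
      by auto
    have "(\<Sum>k<\<mu>. vscale (if k = k0 then c else 0) (B k))
        = (\<Sum>k<\<mu>. if k = k0 then vscale c (B k) else 0)"
      by (rule sum.cong) auto
    also have "\<dots> = vscale c (B k0)" using k0(1) by simp
    finally have "(\<Sum>k<\<mu>. vscale (if k = k0 then c else 0) (B k)) = vscale c x"
      unfolding k0(2) .
    then have "vscale c x + y = (\<Sum>k<\<mu>. vscale ((if k = k0 then c else 0) + a k) (B k))"
      by (simp add: a VS.scale_left_distrib sum.distrib)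
    then show ?case by (rule exI[where x = "\<lambda>k. (if k = k0 then c else 0) + a k"])
  qed
next
  assume "\<exists>a. v = (\<Sum>k<\<mu>. vscale (a k) (B k))"
  then obtain a where v: "v = (\<Sum>k<\<mu>. vscale (a k) (B k))" ..
  have "vscale (a k) (B k) \<in> VS.span {B k | k. k < \<mu>}" if "k < \<mu>" for k
    using that by (intro VS.span_scale VS.span_base) auto
  then show "v \<in> VS.span {B k | k. k < \<mu>}" unfolding v by (intro VS.span_sum) simp
qed

definition mat_mult :: "nat \<Rightarrow> (nat \<Rightarrow> nat \<Rightarrow> 'a::field) \<Rightarrow> (nat \<Rightarrow> nat \<Rightarrow> 'a) \<Rightarrow> (nat \<Rightarrow> nat \<Rightarrow> 'a)" where
  "mat_mult \<mu> A B = (\<lambda>i j. \<Sum>k<\<mu>. A i k * B k j)"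

lemma mat_mult_row: "mat_mult \<mu> A B i = (\<Sum>k<\<mu>. vscale (A i k) (B k))"
  by (rule ext) (simp add: mat_mult_def sum_fun_apply vscale_def)

lemma mat_mult_add_left: "mat_mult \<mu> (A + A') B = mat_mult \<mu> A B + mat_mult \<mu> A' B"
  by (simp add: mat_mult_def fun_eq_iff distrib_right sum.distrib)

lemma mat_mult_zero_left [simp]: "mat_mult \<mu> 0 B = 0"
  by (simp add: mat_mult_def fun_eq_iff)

lemma mat_mult_in_mats:
  assumes "A \<in> mats m \<mu>" and "B \<in> mats \<mu> n"
  shows "mat_mult \<mu> A B \<in> mats m n"
proof -
  have "mat_mult \<mu> A B i j = 0" if "m \<le> i \<or> n \<le> j" for i j
  proof -
    have "A i k * B k j = 0" if "k < \<mu>" for k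
      using assms \<open>m \<le> i \<or> n \<le> j\<close> by (auto simp: mats_def)
    then show ?thesis unfolding mat_mult_def by (intro sum.neutral) simp
  qed
  then show ?thesis by (simp add: mats_def)
qed

lemma rank_support_row_space:
  assumes "B \<in> mats \<mu> n"
  shows "rank_support m n (row_space \<mu> B) = (\<lambda>A. mat_mult \<mu> A B) ` mats m \<mu>"
proof -
  have rows: "rank_support m n (row_space \<mu> B)
      = {V \<in> mats m n. \<forall>i<m. \<exists>a. V i = (\<Sum>k<\<mu>. vscale (a k) (B k))}"
    unfolding rank_support_eq_rows[OF VS.subspace_span] row_space_def in_span_rows_iff ..
  show ?thesis
  proof (intro equalityI subsetI)
    fix V assume "V \<in> rank_support m n (row_space \<mu> B)"
    then have V: "V \<in> mats m n" "\<forall>i<m. \<exists>a. V i = (\<Sum>k<\<mu>. vscale (a k) (B k))"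
      by (simp_all add: rows)
    then have "\<forall>i\<in>{..<m}. \<exists>a. V i = (\<Sum>k<\<mu>. vscale (a k) (B k))" by simp
    from bchoice[OF this] obtain a where a: "\<forall>i\<in>{..<m}. V i = (\<Sum>k<\<mu>. vscale (a i k) (B k))" ..
    define A where "A = (\<lambda>i k. if i < m \<and> k < \<mu> then a i k else 0)"
    have "V i = mat_mult \<mu> A B i" for i
    proof (cases "i < m")
      case True
      have "(\<Sum>k<\<mu>. vscale (A i k) (B k)) = (\<Sum>k<\<mu>. vscale (a i k) (B k))"
        using True by (intro sum.cong) (auto simp: A_def)
      then show ?thesis using a True by (simp add: mat_mult_row)
    next
      case False
      then show ?thesis using V(1) by (simp add: mats_def mat_mult_def A_def fun_eq_iff)
    qed
    then have "V = mat_mult \<mu> A B" by (rule ext)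
    moreover have "A \<in> mats m \<mu>" by (simp add: A_def mats_def)
    ultimately show "V \<in> (\<lambda>A. mat_mult \<mu> A B) ` mats m \<mu>" by (rule image_eqI)
  next
    fix V assume "V \<in> (\<lambda>A. mat_mult \<mu> A B) ` mats m \<mu>"
    then obtain A where A: "A \<in> mats m \<mu>" and V: "V = mat_mult \<mu> A B" by blast
    have "\<forall>i<m. \<exists>a. V i = (\<Sum>k<\<mu>. vscale (a k) (B k))"
      unfolding V mat_mult_row by blast
    then show "V \<in> rank_support m n (row_space \<mu> B)"
      using mat_mult_in_mats[OF A assms] by (simp add: rows V)
  qed
qed

lemma mult_transp_add: "mult_transp m n \<mu> (C + D) B = mult_transp m n \<mu> C B + mult_transp m n \<mu> D B"
  by (auto simp: mult_transp_def fun_eq_iff distrib_right sum.distrib)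

lemma mult_transp_scale: "mult_transp m n \<mu> (mscale a C) B = mscale a (mult_transp m n \<mu> C B)"
  by (auto simp: mult_transp_def fun_eq_iff mscale_def sum_distrib_left mult.assoc)

lemma mult_transp_in_mats: "mult_transp m n \<mu> C B \<in> mats m \<mu>"
  by (auto simp: mult_transp_def mats_def)

lemma linear_mult_transp: "Vector_Spaces.linear mscale mscale (\<lambda>C. mult_transp m n \<mu> C B)"
  by (rule linear_mscaleI[OF mult_transp_add mult_transp_scale])

lemma trace_form_mat_mult:
  "trace_form m n C (mat_mult \<mu> A B) = trace_form m \<mu> (mult_transp m n \<mu> C B) A"
proof -
  have "trace_form m n C (mat_mult \<mu> A B) = (\<Sum>i<m. \<Sum>j<n. \<Sum>k<\<mu>. C i j * B k j * A i k)"
    by (simp add: trace_form_def mat_mult_def sum_distrib_left mult_ac)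
  also have "\<dots> = (\<Sum>i<m. \<Sum>k<\<mu>. \<Sum>j<n. C i j * B k j * A i k)"
    by (rule sum.cong[OF refl], rule sum.swap)
  also have "\<dots> = trace_form m \<mu> (mult_transp m n \<mu> C B) A"
    by (simp add: trace_form_def mult_transp_def sum_distrib_right)
  finally show ?thesis .
qed

lemma card_dual_code_inter_rank_support:
  fixes C :: "(nat \<Rightarrow> nat \<Rightarrow> 'a::{finite,field}) set"
  assumes B: "B \<in> mats \<mu> n" and C: "C \<subseteq> mats m n" "MS.subspace C"
  shows "card (dual_code m n C \<inter> rank_support m n (row_space \<mu> B))
           * card ((\<lambda>c. mult_transp m n \<mu> c B) ` C)
         = card (rank_support m n (row_space \<mu> B))"
proof -
  let ?f = "\<lambda>c. mult_transp m n \<mu> c B"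
  let ?h = "\<lambda>A. mat_mult \<mu> A B"
  define G where "G = dual_code m \<mu> (?f ` C)"
  define Z where "Z = {A \<in> mats m \<mu>. ?h A = 0}"
  have "?f ` C \<subseteq> mats m \<mu>" using mult_transp_in_mats by blast
  moreover have "MS.subspace (?f ` C)"
    by (rule linear_mscale_image_subspace[OF linear_mult_transp C(2)])
  ultimately have card_G: "card G * card (?f ` C) = card (mats m \<mu> :: (nat \<Rightarrow> nat \<Rightarrow> 'a) set)"
    unfolding G_def card_mats by (rule card_dual_code_mult_card)
  have G_iff: "A \<in> G \<longleftrightarrow> A \<in> mats m \<mu> \<and> (\<forall>c\<in>C. trace_form m n c (?h A) = 0)" for A
    by (auto simp: G_def dual_code_trace_form trace_form_mat_mult)
  have G_sub: "G \<subseteq> mats m \<mu>" using G_iff by blast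
  have image_G: "dual_code m n C \<inter> rank_support m n (row_space \<mu> B) = ?h ` G"
    unfolding rank_support_row_space[OF B] dual_code_trace_form
    using G_iff mat_mult_in_mats[OF _ B] by blast
  have kernel_G: "{A \<in> G. ?h A = 0} = Z"
    using G_iff G_sub by (auto simp: Z_def)
  have card_mats_m\<mu>: "card (mats m \<mu> :: (nat \<Rightarrow> nat \<Rightarrow> 'a) set) = card (?h ` mats m \<mu>) * card Z"
    unfolding Z_def
    by (rule MS.card_eq_card_image_mult_card_kernel[OF finite_mats subspace_mats mat_mult_add_left])
  have "card G = card (?h ` G) * card Z"
    unfolding kernel_G[symmetric]
    by (rule MS.card_eq_card_image_mult_card_kernel[OF finite_subset[OF G_sub finite_mats]
          _ mat_mult_add_left]) (simp add: G_def subspace_dual_code)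
  moreover have "card Z > 0"
    using MS.subspace_0[OF subspace_mats, of m \<mu>] by (auto simp: Z_def card_gt_0_iff)
  ultimately have "card (?h ` G) * card (?f ` C) = card (?h ` mats m \<mu>)"
    using card_G card_mats_m\<mu> by (simp add: mult_ac)
  then show ?thesis unfolding image_G by (simp add: rank_support_row_space[OF B])
qed

section \<open>Information leaked by coset coding\<close>

lemma sum_card_joint_fibres:
  assumes "finite A"
  shows "(\<Sum>x\<in>X ` A. \<Sum>y\<in>Y ` A. card {v\<in>A. X v = x \<and> Y v = y}) = card A"
proof -
  have "(\<Sum>y\<in>Y ` A. card {v\<in>A. X v = x \<and> Y v = y}) = card {v\<in>A. X v = x}" for x
  proof -
    have "(\<Sum>y\<in>Y ` A. sum (\<lambda>_. 1::nat) {z \<in> {v\<in>A. X v = x}. Y z = y})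
        = sum (\<lambda>_. 1) {v\<in>A. X v = x}"
      by (rule sum.group) (use assms in auto)
    moreover have "{z \<in> {v\<in>A. X v = x}. Y z = y} = {v\<in>A. X v = x \<and> Y v = y}" for y
      by auto
    ultimately show ?thesis by simp
  qed
  moreover have "(\<Sum>x\<in>X ` A. sum (\<lambda>_. 1::nat) {v\<in>A. X v = x}) = sum (\<lambda>_. 1) A"
    by (rule sum.group) (use assms in auto)
  ultimately show ?thesis by simp
qed

text \<open>The hypothesis says that p(x, y) / (p(x) p(y)) = R on the support of the uniform
  distribution on A.\<close>

lemma mutual_info_pmf_of_set_const_ratio:
  fixes X :: "'w \<Rightarrow> 'x" and Y :: "'w \<Rightarrow> 'y" and R :: real
  assumes A: "finite A" "A \<noteq> {}"
    and ratio: "\<And>w. w \<in> A \<Longrightarrow> real (card A) * real (card {v\<in>A. X v = X w \<and> Y v = Y w})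
                   = R * (real (card {v\<in>A. X v = X w}) * real (card {v\<in>A. Y v = Y w}))"
  shows "mutual_info b (pmf_of_set A) X Y = log b R"
proof -
  define N where "N x y = card {v\<in>A. X v = x \<and> Y v = y}" for x y
  have prob: "measure_pmf.prob (pmf_of_set A) {w. P w} = card {v\<in>A. P v} / card A" for P
    using measure_pmf_of_set[OF A(2,1)] by (simp add: Int_def)
  have "(let pxy = measure_pmf.prob (pmf_of_set A) {w. X w = x \<and> Y w = y};
             px = measure_pmf.prob (pmf_of_set A) {w. X w = x};
             py = measure_pmf.prob (pmf_of_set A) {w. Y w = y}
         in if pxy = 0 then 0 else pxy * log b (pxy / (px * py)))
        = N x y / card A * log b R" for x y
  proof (cases "N x y = 0")
    case True
    then show ?thesis by (simp add: Let_def prob N_def)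
  next
    case False
    then have "{v\<in>A. X v = x \<and> Y v = y} \<noteq> {}" unfolding N_def by (metis card.empty)
    then obtain w where w: "w \<in> A" "X w = x" "Y w = y" by blast
    have pos: "real (card A) > 0" "real (card {v\<in>A. X v = x}) > 0" "real (card {v\<in>A. Y v = y}) > 0"
      using w A by (auto simp: card_gt_0_iff)
    let ?pxy = "measure_pmf.prob (pmf_of_set A) {w. X w = x \<and> Y w = y}"
    have "real (N x y) / card A / (card {v\<in>A. X v = x} / card A * (card {v\<in>A. Y v = y} / card A))
        = R"
      using ratio[OF w(1)] unfolding w N_def using pos by (simp add: field_simps)
    then have ratio_xy: "?pxy / (measure_pmf.prob (pmf_of_set A) {w. X w = x}
        * measure_pmf.prob (pmf_of_set A) {w. Y w = y}) = R"
      by (simp only: prob N_def)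
    have "?pxy = N x y / card A" by (simp add: prob N_def)
    moreover have "?pxy \<noteq> 0" using False pos(1) by (simp add: prob N_def)
    ultimately show ?thesis unfolding Let_def ratio_xy by simp
  qed
  then have "mutual_info b (pmf_of_set A) X Y = (\<Sum>x\<in>X ` A. \<Sum>y\<in>Y ` A. real (N x y)) / card A * log b R"
    unfolding mutual_info_def set_pmf_of_set[OF A(2,1)]
    by (simp add: sum_divide_distrib sum_distrib_right)
  moreover have "(\<Sum>x\<in>X ` A. \<Sum>y\<in>Y ` A. N x y) = card A"
    unfolding N_def by (rule sum_card_joint_fibres[OF A(1)])
  ultimately show ?thesis using A by (simp flip: of_nat_sum)
qed

context module begin

lemma bij_betw_coset_encoding:
  assumes "subspace C2" and "subspace W" and "W \<inter> C2 = {0}"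
    and C1: "C1 = {D + w | D w. D \<in> C2 \<and> w \<in> W}" and \<psi>: "bij_betw \<psi> V W"
  shows "bij_betw (\<lambda>(x, D). \<psi> x + D) (V \<times> C2) C1"
proof (rule bij_betwI')
  fix u v assume "u \<in> V \<times> C2" "v \<in> V \<times> C2"
  then obtain x D x' D' where u: "u = (x, D)" "x \<in> V" "D \<in> C2"
    and v: "v = (x', D')" "x' \<in> V" "D' \<in> C2" by blast
  show "((\<lambda>(x, D). \<psi> x + D) u = (\<lambda>(x, D). \<psi> x + D) v) = (u = v)"
  proof
    assume eq: "(\<lambda>(x, D). \<psi> x + D) u = (\<lambda>(x, D). \<psi> x + D) v"
    have "\<psi> x \<in> W" "\<psi> x' \<in> W" using \<psi> u v by (auto simp: bij_betw_def)
    then have "\<psi> x - \<psi> x' \<in> W" by (rule subspace_diff[OF assms(2)])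
    moreover have "\<psi> x - \<psi> x' = D' - D" using eq u v by (simp add: algebra_simps)
    then have "\<psi> x - \<psi> x' \<in> C2" using u v by (simp add: subspace_diff[OF assms(1)])
    ultimately have "\<psi> x - \<psi> x' \<in> W \<inter> C2" by (rule IntI)
    then have "\<psi> x = \<psi> x'" using assms(3) by simp
    then have "x = x'" using \<psi> u v by (auto simp: bij_betw_def inj_on_def)
    then show "u = v" using eq u v by simp
  qed simp
next
  fix u assume "u \<in> V \<times> C2"
  then obtain x D where u: "u = (x, D)" "x \<in> V" "D \<in> C2" by blast
  then have "\<psi> x \<in> W" using \<psi> by (auto simp: bij_betw_def)
  then show "(\<lambda>(x, D). \<psi> x + D) u \<in> C1"
    unfolding C1 u(1) using u(3)
    by (intro CollectI exI[of _ D] exI[of _ "\<psi> x"]) (simp add: add.commute)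
next
  fix c assume "c \<in> C1"
  then obtain D w where "D \<in> C2" "w \<in> W" "c = D + w" by (auto simp: C1)
  moreover obtain x where "x \<in> V" "w = \<psi> x" using \<psi> \<open>w \<in> W\<close> by (auto simp: bij_betw_def)
  ultimately show "\<exists>u\<in>V \<times> C2. c = (\<lambda>(x, D). \<psi> x + D) u"
    by (intro bexI[of _ "(x, D)"]) (simp_all add: add.commute)
qed

lemma card_fibre_bij_betw_eq_card_kernel:
  fixes g :: "'b \<Rightarrow> 'c::ab_group_add"
  assumes bij: "bij_betw \<Phi> A X" and "subspace X" and "\<And>x y. g (x + y) = g x + g y" and "u \<in> A"
  shows "card {v\<in>A. g (\<Phi> v) = g (\<Phi> u)} = card {x\<in>X. g x = 0}"
proof -
  let ?S = "{v\<in>A. g (\<Phi> v) = g (\<Phi> u)}"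
  have "inj_on \<Phi> ?S" by (rule inj_on_subset[OF bij_betw_imp_inj_on[OF bij]]) blast
  then have "card ?S = card (\<Phi> ` ?S)" by (rule card_image[symmetric])
  also have "\<Phi> ` ?S = {x \<in> \<Phi> ` A. g x = g (\<Phi> u)}" by blast
  also have "\<dots> = {x\<in>X. g (0 + x) = g (0 + \<Phi> u)}"
    using bij_betw_imp_surj_on[OF bij] by simp
  also have "card \<dots> = card {x\<in>X. g x = 0}"
    by (rule card_fibre_eq_card_kernel[where g = g, OF assms(2,3) bij_betw_apply[OF bij assms(4)]])
  finally show ?thesis .
qed

lemma mutual_info_coset_coding:
  fixes f :: "'b \<Rightarrow> 'c::ab_group_add" and \<psi> :: "'v \<Rightarrow> 'b"
  assumes V: "finite V" "V \<noteq> {}" and "finite C2"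
    and subspaces: "subspace C1" "subspace C2" "subspace W" and WC2: "W \<inter> C2 = {0}"
    and C1: "C1 = {D + w | D w. D \<in> C2 \<and> w \<in> W}" and \<psi>: "bij_betw \<psi> V W"
    and f: "\<And>x y. f (x + y) = f x + f y"
  shows "mutual_info b (pmf_of_set (V \<times> C2)) fst (\<lambda>(x, D). f (\<psi> x + D))
           = log b (card (f ` C1) / card (f ` C2))"
proof -
  let ?A = "V \<times> C2"
  define \<Phi> where "\<Phi> = (\<lambda>(x, D). \<psi> x + D)"
  define K1 where "K1 = card {c\<in>C1. f c = 0}"
  define K2 where "K2 = card {D\<in>C2. f D = 0}"
  have bij: "bij_betw \<Phi> ?A C1"
    unfolding \<Phi>_def by (rule bij_betw_coset_encoding[OF subspaces(2,3) WC2 C1 \<psi>])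
  have fin: "finite ?A" "finite C1" using V assms(3) bij_betw_finite[OF bij] by auto
  have card_A: "card ?A = card (f ` C1) * K1"
    using bij_betw_same_card[OF bij]
      card_eq_card_image_mult_card_kernel[where g = f, OF fin(2) subspaces(1) f]
    by (simp add: K1_def)
  have card_C2: "card C2 = card (f ` C2) * K2"
    unfolding K2_def by (rule card_eq_card_image_mult_card_kernel[where g = f, OF assms(3) subspaces(2) f])
  have "card (f ` C2) > 0" using assms(3) subspace_0[OF subspaces(2)] by (auto simp: card_gt_0_iff)
  have "(\<lambda>(x, D). f (\<psi> x + D)) = (\<lambda>u. f (\<Phi> u))" by (auto simp: \<Phi>_def)
  moreover have "mutual_info b (pmf_of_set ?A) fst (\<lambda>u. f (\<Phi> u)) = log b (card (f ` C1) / card (f ` C2))"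
  proof (rule mutual_info_pmf_of_set_const_ratio)
    show "finite ?A" "?A \<noteq> {}" using fin V subspace_0[OF subspaces(2)] by auto
    fix u assume "u \<in> ?A"
    then obtain x D where u: "u = (x, D)" "x \<in> V" "D \<in> C2" by blast
    have "{v\<in>?A. fst v = fst u \<and> f (\<Phi> v) = f (\<Phi> u)} = Pair x ` {D'\<in>C2. f (\<psi> x + D') = f (\<psi> x + D)}"
      using u by (auto simp: \<Phi>_def)
    then have "card {v\<in>?A. fst v = fst u \<and> f (\<Phi> v) = f (\<Phi> u)} = K2"
      using card_fibre_eq_card_kernel[where g = f, OF subspaces(2) f u(3)]
      by (simp add: card_image inj_on_def K2_def)
    moreover have "{v\<in>?A. fst v = fst u} = Pair x ` C2" using u by auto
    then have "card {v\<in>?A. fst v = fst u} = card C2" by (simp add: card_image inj_on_def)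
    moreover have "card {v\<in>?A. f (\<Phi> v) = f (\<Phi> u)} = K1"
      unfolding K1_def by (rule card_fibre_bij_betw_eq_card_kernel[OF bij subspaces(1) f \<open>u \<in> ?A\<close>])
    \<comment> \<open>|A| K2 = |f C1| K1 K2 = (|f C1| / |f C2|) |C2| K1\<close>
    ultimately show "real (card ?A) * real (card {v\<in>?A. fst v = fst u \<and> f (\<Phi> v) = f (\<Phi> u)})
        = card (f ` C1) / card (f ` C2)
          * (real (card {v\<in>?A. fst v = fst u}) * real (card {v\<in>?A. f (\<Phi> v) = f (\<Phi> u)}))"
      using \<open>card (f ` C2) > 0\<close> by (simp add: card_A card_C2)
  qed
  ultimately show ?thesis by simp
qed

end

section \<open>Relative generalized matrix weights and leakage\<close>

definition rel_dim ::
    "nat \<Rightarrow> nat \<Rightarrow> (nat \<Rightarrow> nat \<Rightarrow> 'a::field) set \<Rightarrow> (nat \<Rightarrow> nat \<Rightarrow> 'a) set \<Rightarrow> (nat \<Rightarrow> 'a) set \<Rightarrow> int" where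
  "rel_dim m n D1 D2 L = int (mdim (D1 \<inter> rank_support m n L)) - int (mdim (D2 \<inter> rank_support m n L))"

lemma rel_dim_nonneg_and_pos_iff:
  fixes D1 D2 :: "(nat \<Rightarrow> nat \<Rightarrow> 'a::{finite,field}) set"
  assumes "D2 \<subseteq> D1" and "D1 \<subseteq> mats m n" and "MS.subspace D1" and "MS.subspace D2"
    and "VS.subspace L"
  shows "0 \<le> rel_dim m n D1 D2 L"
    and "0 < rel_dim m n D1 D2 L \<longleftrightarrow> (\<exists>C \<in> D1 \<inter> rank_support m n L. C \<notin> D2)"
proof -
  let ?V = "rank_support m n L"
  have fin: "finite (D1 \<inter> ?V)" using finite_subset[OF assms(2) finite_mats] by blast
  note mono = MS.dim_subspace_mono[OF _ fin MS.subspace_inter[OF assms(4) subspace_rank_support[OF assms(5)]]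
      MS.subspace_inter[OF assms(3) subspace_rank_support[OF assms(5)]]]
  have sub: "D2 \<inter> ?V \<subseteq> D1 \<inter> ?V" using assms(1) by blast
  show "0 \<le> rel_dim m n D1 D2 L" using mono(1)[OF _ sub] by (simp add: rel_dim_def)
  have "D2 \<inter> ?V \<noteq> D1 \<inter> ?V \<longleftrightarrow> (\<exists>C \<in> D1 \<inter> ?V. C \<notin> D2)" using sub by blast
  then show "0 < rel_dim m n D1 D2 L \<longleftrightarrow> (\<exists>C \<in> D1 \<inter> ?V. C \<notin> D2)"
    using mono(2)[OF _ sub] by (simp add: rel_dim_def)
qed

lemma Least_eq_Least_nat:
  fixes P Q :: "nat \<Rightarrow> bool"
  assumes "Q k" and "\<And>k. P k \<Longrightarrow> Q k" and "\<And>k. Q k \<Longrightarrow> \<exists>j\<le>k. P j"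
  shows "(LEAST k. P k) = (LEAST k. Q k)"
proof (rule antisym)
  obtain j where "j \<le> (LEAST k. Q k)" "P j" using assms(3) LeastI[of Q, OF assms(1)] by blast
  then show "(LEAST k. P k) \<le> (LEAST k. Q k)" using Least_le[of P j] by linarith
  obtain j where "P j" using assms(1,3) by blast
  then show "(LEAST k. Q k) \<le> (LEAST k. P k)" using LeastI assms(2) Least_le by metis
qed

locale coset_coding_scheme =
  fixes m n l :: nat and C1 C2 W :: "(nat \<Rightarrow> nat \<Rightarrow> 'a::{finite,field}) set"
    and \<psi> :: "(nat \<Rightarrow> 'a) \<Rightarrow> (nat \<Rightarrow> nat \<Rightarrow> 'a)"
  assumes lin_code_C1: "lin_code m n C1" and lin_code_C2: "lin_code m n C2"
    and C2_psubset_C1: "C2 \<subset> C1" and l_eq: "l = mdim C1 - mdim C2"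
    and subspace_W: "msubspace W" and W_inter_C2: "W \<inter> C2 = {0}"
    and C1_eq: "C1 = {D + V | D V. D \<in> C2 \<and> V \<in> W}" and \<psi>: "bij_betw \<psi> (vecs l) W"
begin

abbreviation leak :: "nat \<Rightarrow> (nat \<Rightarrow> nat \<Rightarrow> 'a) \<Rightarrow> real" where
  "leak \<equiv> leak_info m n l C2 \<psi>"

abbreviation dual_rel_dim :: "(nat \<Rightarrow> 'a) set \<Rightarrow> int" where
  "dual_rel_dim \<equiv> rel_dim m n (dual_code m n C2) (dual_code m n C1)"

lemma C1_subset: "C1 \<subseteq> mats m n" and subspace_C1: "MS.subspace C1"
  and C2_subset: "C2 \<subseteq> mats m n" and subspace_C2: "MS.subspace C2"
  using lin_code_C1 lin_code_C2 by (simp_all add: lin_code_def)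

lemma dual_code_C1_psubset: "dual_code m n C1 \<subset> dual_code m n C2"
  by (rule dual_code_psubset[OF C2_psubset_C1 C1_subset subspace_C2 subspace_C1])

lemma dual_rel_dim_nonneg_and_pos_iff:
  assumes "VS.subspace L"
  shows "0 \<le> dual_rel_dim L"
    and "0 < dual_rel_dim L \<longleftrightarrow> (\<exists>C \<in> dual_code m n C2 \<inter> rank_support m n L. C \<notin> dual_code m n C1)"
  using rel_dim_nonneg_and_pos_iff[OF psubset_imp_subset[OF dual_code_C1_psubset] _
      subspace_dual_code subspace_dual_code assms]
  by (auto simp: dual_code_def)

lemma leak_eq_dual_rel_dim:
  assumes B: "B \<in> mats \<mu> n"
  shows "leak \<mu> B = dual_rel_dim (row_space \<mu> B)"
proof -
  let ?f = "\<lambda>c. mult_transp m n \<mu> c B"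
  let ?V = "rank_support m n (row_space \<mu> B)"
  let ?q = "real CARD('a)"
  define d where "d C = mdim (dual_code m n C \<inter> ?V)" for C
  have "0 \<in> vecs l" by (simp add: vecs_def)
  then have "leak \<mu> B = log ?q (card (?f ` C1) / card (?f ` C2))"
    unfolding leak_info_def
    by (intro MS.mutual_info_coset_coding[OF finite_vecs _ finite_subset[OF C2_subset finite_mats]
          subspace_C1 subspace_C2 subspace_W W_inter_C2 C1_eq \<psi> mult_transp_add]) blast
  moreover have "card (?f ` C) = card ?V / ?q ^ d C"
    if "C \<subseteq> mats m n" and "MS.subspace C" for C
  proof -
    have "finite (dual_code m n C \<inter> ?V)" by (simp add: dual_code_def)
    then have "card (dual_code m n C \<inter> ?V) = CARD('a) ^ d C"
      unfolding d_def
      by (intro MS.card_subspace MS.subspace_inter subspace_dual_code subspace_rank_support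
          subspace_row_space) simp_all
    then show ?thesis
      using card_dual_code_inter_rank_support[OF B that] two_le_card_field[where 'a='a]
      by (simp add: field_simps flip: of_nat_mult of_nat_power)
  qed
  moreover have "card ?V > 0"
  proof -
    have "0 \<in> ?V" by (rule MS.subspace_0[OF subspace_rank_support[OF subspace_row_space]])
    moreover have "finite ?V" by (rule finite_subset[OF _ finite_mats]) (auto simp: rank_support_def)
    ultimately show ?thesis by (auto simp: card_gt_0_iff)
  qed
  ultimately have "leak \<mu> B = log ?q (?q ^ d C2 / ?q ^ d C1)"
    using two_le_card_field[where 'a='a] C1_subset C2_subset subspace_C1 subspace_C2
    by (simp add: field_simps)
  also have "\<dots> = real (d C2) - real (d C1)"
    using two_le_card_field[where 'a='a] by (simp add: log_divide log_nat_power)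
  finally show ?thesis by (simp add: rel_dim_def d_def)
qed

lemma dual_rel_dim_vecs: "dual_rel_dim (vecs n) = int l"
proof -
  have "rank_support m n (vecs n) = (mats m n :: (nat \<Rightarrow> nat \<Rightarrow> 'a) set)"
    unfolding rank_support_eq_rows[OF subspace_vecs] by (auto simp: mats_def vecs_def)
  then have "dual_rel_dim (vecs n) = int (mdim (dual_code m n C2)) - int (mdim (dual_code m n C1))"
    unfolding rel_dim_def by (simp add: Int_absorb2 dual_code_subset_mats)
  moreover have "mdim C2 \<le> mdim C1"
    using MS.dim_subspace_mono(1)[OF _ finite_subset[OF C1_subset finite_mats] subspace_C2 subspace_C1]
      C2_psubset_C1 by auto
  ultimately show ?thesis
    using mdim_dual_code[OF C1_subset subspace_C1] mdim_dual_code[OF C2_subset subspace_C2] l_eq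
    by linarith
qed

lemma rgmw_eq_Least_leak:
  assumes "r \<le> l"
  shows "rgmw m n r (dual_code m n C2) (dual_code m n C1)
           = (LEAST \<mu>. \<exists>B \<in> mats \<mu> n. leak \<mu> B \<ge> real r)"
  unfolding rgmw_def rel_dim_def[symmetric]
proof (rule Least_eq_Least_nat)
  have "vdim (vecs n :: (nat \<Rightarrow> 'a) set) \<le> n" by (simp add: vdim_vecs)
  from obtain_matrix_with_row_space[OF order_refl subspace_vecs this]
  obtain B :: "nat \<Rightarrow> nat \<Rightarrow> 'a" where B: "B \<in> mats n n" "row_space n B = vecs n" .
  then have "leak n B \<ge> real r" using leak_eq_dual_rel_dim[OF B(1)] dual_rel_dim_vecs assms by simp
  then show "\<exists>B \<in> mats n n. leak n B \<ge> real r" using B(1) by blast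
next
  fix k assume "\<exists>L. L \<subseteq> vecs n \<and> vsubspace L \<and> vdim L = k \<and> int r \<le> dual_rel_dim L"
  then obtain L where L: "L \<subseteq> vecs n" "vsubspace L" "vdim L = k" "int r \<le> dual_rel_dim L" by blast
  from obtain_matrix_with_row_space[OF L(1,2) eq_imp_le[OF L(3)]]
  obtain B where B: "B \<in> mats k n" "row_space k B = L" .
  then have "leak k B \<ge> real r" using L(4) leak_eq_dual_rel_dim[OF B(1)] by simp
  then show "\<exists>B \<in> mats k n. leak k B \<ge> real r" using B(1) by blast
next
  fix \<mu> assume "\<exists>B \<in> mats \<mu> n. leak \<mu> B \<ge> real r"
  then obtain B where B: "B \<in> mats \<mu> n" "leak \<mu> B \<ge> real r" by blast
  then have "int r \<le> dual_rel_dim (row_space \<mu> B)" using leak_eq_dual_rel_dim by simp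
  then show "\<exists>k\<le>\<mu>. \<exists>L. L \<subseteq> vecs n \<and> vsubspace L \<and> vdim L = k \<and> int r \<le> dual_rel_dim L"
    using row_space_subset_vecs[OF B(1)] subspace_row_space[of \<mu> B] vdim_row_space_le[of \<mu> B]
    by blast
qed

lemma rdrsp_eq_Max_leak:
  "real_of_int (rdrsp m n \<mu> (dual_code m n C2) (dual_code m n C1))
     = Max {leak \<mu>' B | \<mu>' B. \<mu>' \<le> \<mu> \<and> B \<in> mats \<mu>' n}"
proof -
  define Ls where "Ls = {L :: (nat \<Rightarrow> 'a) set. L \<subseteq> vecs n \<and> vsubspace L \<and> vdim L \<le> \<mu>}"
  have rdrsp: "rdrsp m n \<mu> (dual_code m n C2) (dual_code m n C1) = Max (dual_rel_dim ` Ls)"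
    unfolding rdrsp_def rel_dim_def[symmetric] Ls_def by (simp only: setcompr_eq_image)
  have leaks: "{leak \<mu>' B | \<mu>' B. \<mu>' \<le> \<mu> \<and> B \<in> mats \<mu>' n} = real_of_int ` dual_rel_dim ` Ls"
  proof (intro equalityI subsetI)
    fix x assume "x \<in> {leak \<mu>' B | \<mu>' B. \<mu>' \<le> \<mu> \<and> B \<in> mats \<mu>' n}"
    then obtain \<mu>' B where "x = leak \<mu>' B" "\<mu>' \<le> \<mu>" "B \<in> mats \<mu>' n" by blast
    moreover have "row_space \<mu>' B \<in> Ls"
      using calculation row_space_subset_vecs subspace_row_space vdim_row_space_le[of \<mu>' B]
      by (auto simp: Ls_def)
    ultimately show "x \<in> real_of_int ` dual_rel_dim ` Ls" using leak_eq_dual_rel_dim by auto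
  next
    fix x assume "x \<in> real_of_int ` dual_rel_dim ` Ls"
    then obtain L where L: "L \<subseteq> vecs n" "vsubspace L" "vdim L \<le> \<mu>" "x = dual_rel_dim L"
      by (auto simp: Ls_def)
    from obtain_matrix_with_row_space[OF L(1,2) order_refl]
    obtain B where B: "B \<in> mats (vdim L) n" "row_space (vdim L) B = L" .
    then have "x = leak (vdim L) B" using leak_eq_dual_rel_dim[OF B(1)] L(4) by simp
    then show "x \<in> {leak \<mu>' B | \<mu>' B. \<mu>' \<le> \<mu> \<and> B \<in> mats \<mu>' n}"
      using B(1) L(3) by blast
  qed
  have "finite Ls" by (rule finite_subset[of _ "Pow (vecs n)"]) (auto simp: Ls_def)
  moreover have "row_space 0 (0 :: nat \<Rightarrow> nat \<Rightarrow> 'a) \<in> Ls"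
    using row_space_subset_vecs[of "0 :: nat \<Rightarrow> nat \<Rightarrow> 'a" 0 n] subspace_row_space
      vdim_row_space_le[of 0 "0 :: nat \<Rightarrow> nat \<Rightarrow> 'a"]
    by (auto simp: Ls_def mats_def)
  ultimately show ?thesis
    unfolding rdrsp leaks by (intro mono_Max_commute) (auto intro: monoI)
qed

lemma rel_rank_dist_attained:
  obtains C where "C \<in> dual_code m n C2" "C \<notin> dual_code m n C1"
    "rk m C = rel_rank_dist m (dual_code m n C2) (dual_code m n C1)"
  using LeastI_ex[of "\<lambda>k. \<exists>C\<in>dual_code m n C2. C \<notin> dual_code m n C1 \<and> rk m C = k"]
    dual_code_C1_psubset that unfolding rel_rank_dist_def by blast

lemma rel_rank_dist_le_rk:
  "C \<in> dual_code m n C2 \<Longrightarrow> C \<notin> dual_code m n C1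
    \<Longrightarrow> rel_rank_dist m (dual_code m n C2) (dual_code m n C1) \<le> rk m C"
  unfolding rel_rank_dist_def by (blast intro: Least_le)

lemma rel_rank_dist_pos: "0 < rel_rank_dist m (dual_code m n C2) (dual_code m n C1)"
proof (rule ccontr)
  assume d0: "\<not> 0 < rel_rank_dist m (dual_code m n C2) (dual_code m n C1)"
  obtain C where C: "C \<in> dual_code m n C2" "C \<notin> dual_code m n C1"
    "rk m C = rel_rank_dist m (dual_code m n C2) (dual_code m n C1)"
    by (rule rel_rank_dist_attained)
  have "C \<in> mats m n" using C(1) dual_code_subset_mats by blast
  moreover have "rk m C = 0" using C(3) d0 by simp
  ultimately have "C = 0" by (rule rk_eq_0_imp_zero)
  then show False using C(2) MS.subspace_0[OF subspace_dual_code[of m n C1]] by simp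
qed

lemma leak_eq_0_if_less_rel_rank_dist:
  assumes B: "B \<in> mats \<mu> n" and "\<mu> < rel_rank_dist m (dual_code m n C2) (dual_code m n C1)"
  shows "leak \<mu> B = 0"
proof -
  have "\<not> 0 < dual_rel_dim (row_space \<mu> B)"
  proof
    assume "0 < dual_rel_dim (row_space \<mu> B)"
    then obtain C where C: "C \<in> dual_code m n C2" "C \<in> rank_support m n (row_space \<mu> B)"
        "C \<notin> dual_code m n C1"
      using dual_rel_dim_nonneg_and_pos_iff(2)[OF subspace_row_space] by blast
    have "rk m C \<le> \<mu>"
      using rk_le_vdim[OF C(2) row_space_subset_vecs[OF B] subspace_row_space]
        vdim_row_space_le[of \<mu> B] by linarith
    then show False using rel_rank_dist_le_rk[OF C(1,3)] assms(2) by linarith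
  qed
  then show ?thesis
    using dual_rel_dim_nonneg_and_pos_iff(1)[OF subspace_row_space, of \<mu> B]
      leak_eq_dual_rel_dim[OF B] by simp
qed

lemma ex_leak_ne_0_if_rel_rank_dist_le:
  assumes "rel_rank_dist m (dual_code m n C2) (dual_code m n C1) \<le> \<mu>"
  shows "\<exists>B \<in> mats \<mu> n. leak \<mu> B \<noteq> 0"
proof -
  obtain C where C: "C \<in> dual_code m n C2" "C \<notin> dual_code m n C1"
    "rk m C = rel_rank_dist m (dual_code m n C2) (dual_code m n C1)"
    by (rule rel_rank_dist_attained)
  have C_mats: "C \<in> mats m n" using C(1) dual_code_subset_mats by blast
  then have "row_space m C \<subseteq> vecs n" by (rule row_space_subset_vecs)
  moreover have "vdim (row_space m C) \<le> \<mu>" using C(3) assms by (simp add: rk_def)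
  ultimately obtain B where B: "B \<in> mats \<mu> n" "row_space \<mu> B = row_space m C"
    by (rule obtain_matrix_with_row_space[OF _ subspace_row_space])
  have "C \<in> rank_support m n (row_space m C)" using C_mats by (simp add: rank_support_def)
  then have "0 < dual_rel_dim (row_space m C)"
    using dual_rel_dim_nonneg_and_pos_iff(2)[OF subspace_row_space] C(1,2) by blast
  moreover have "leak \<mu> B = dual_rel_dim (row_space m C)"
    using leak_eq_dual_rel_dim[OF B(1)] B(2) by simp
  ultimately have "leak \<mu> B \<noteq> 0" by simp
  with B(1) show ?thesis by blast
qed

lemma leak_vanishes_iff_less_rel_rank_dist:
  "(\<forall>B \<in> mats \<mu> n. leak \<mu> B = 0) \<longleftrightarrow> \<mu> < rel_rank_dist m (dual_code m n C2) (dual_code m n C1)"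
  using leak_eq_0_if_less_rel_rank_dist ex_leak_ne_0_if_rel_rank_dist_le by (meson not_le)

lemma rel_rank_dist_eq_Greatest_zero_leak:
  "int (rel_rank_dist m (dual_code m n C2) (dual_code m n C1)) - 1
     = int (GREATEST \<mu>. \<forall>B \<in> mats \<mu> n. leak \<mu> B = 0)"
proof -
  let ?d = "rel_rank_dist m (dual_code m n C2) (dual_code m n C1)"
  have "(GREATEST \<mu>. \<forall>B \<in> mats \<mu> n. leak \<mu> B = 0) = ?d - 1"
    using leak_vanishes_iff_less_rel_rank_dist rel_rank_dist_pos
    by (intro Greatest_equality) auto
  then show ?thesis using rel_rank_dist_pos by (simp add: of_nat_diff)
qed

end

theorem theorem1:
  fixes C1 C2 W :: "(nat \<Rightarrow> nat \<Rightarrow> 'a::{finite,field}) set"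
    and \<psi> :: "(nat \<Rightarrow> 'a) \<Rightarrow> (nat \<Rightarrow> nat \<Rightarrow> 'a)"
    and m n l :: nat
  assumes "0 < m" and "0 < n"
    and "lin_code m n C1" and "lin_code m n C2" and "C2 \<subset> C1"
    and "l = mdim C1 - mdim C2"
    and "msubspace W" and "W \<inter> C2 = {0}" and "C1 = {D + V | D V. D \<in> C2 \<and> V \<in> W}"
    and "\<And>c x y. x \<in> vecs l \<Longrightarrow> y \<in> vecs l \<Longrightarrow> \<psi> (vscale c x + y) = mscale c (\<psi> x) + \<psi> y"
    and "bij_betw \<psi> (vecs l) W"
  shows "(\<forall>r. 1 \<le> r \<and> r \<le> l \<longrightarrow>
            rgmw m n r (dual_code m n C2) (dual_code m n C1) =
            (LEAST \<mu>. \<exists>B \<in> mats \<mu> n. leak_info m n l C2 \<psi> \<mu> B \<ge> real r))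
      \<and> (\<forall>\<mu>. \<mu> \<le> n \<longrightarrow>
            real_of_int (rdrsp m n \<mu> (dual_code m n C2) (dual_code m n C1)) =
            Max {leak_info m n l C2 \<psi> \<mu>' B | \<mu>' B. \<mu>' \<le> \<mu> \<and> B \<in> mats \<mu>' n})
      \<and> int (rel_rank_dist m (dual_code m n C2) (dual_code m n C1)) - 1 =
            int (GREATEST \<mu>. \<forall>B \<in> mats \<mu> n. leak_info m n l C2 \<psi> \<mu> B = 0)"
proof -
  interpret coset_coding_scheme m n l C1 C2 W \<psi>
    using assms(3-9,11) by unfold_locales
  show ?thesis
    using rgmw_eq_Least_leak rdrsp_eq_Max_leak rel_rank_dist_eq_Greatest_zero_leak by blast
qed

end
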